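(* Let $a,b$ be coprime integers with $\tfrac{a}{b}<0$ and $-a>b>2$, and let $\mathcal{D}=\{0,1,\ldots,|a|-1\}$. Let $N=N_0\in\mathbb{Z}$ and define integers $N_1,N_2,\ldots$ and digits $d_0,d_1,\ldots\in\mathcal{D}$ recursively by $$bN_j=aN_{j+1}+d_j,$$ where $d_j\in\mathcal{D}$ is the unique digit with $d_j\equiv bN_j \pmod{a}$ (so that $N_{j+1}=(bN_j-d_j)/a\in\mathbb{Z}$). Then the sequence $(N_j)_{j\ge 0}$ is eventually zero. *)

theory Defs
  imports Complex_Main "HOL-Number_Theory.Cong"
begin

end

theory Submission
  imports Defs
begin

text \<open>
  With \<open>A = -a > b > 0\<close>, a step \<open>b n = a m + d\<close> with digit \<open>0 \<le> d < A\<close> puts \<open>A m\<close> in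
  \<open>[-b n, -b n + A)\<close>, so \<open>m = \<lceil>-(b/A) n\<rceil>\<close> lies in \<open>(-n, 0]\<close> for \<open>n > 0\<close> and in \<open>(0, -n]\<close>
  for \<open>n < 0\<close>. Hence the position of \<open>N\<^sub>j\<close> in the zigzag enumeration \<open>0, 1, -1, 2, -2, \<dots>\<close>
  of \<open>\<int>\<close> strictly decreases until it reaches the fixed point \<open>0\<close>.
\<close>

lemma digit_step_zero:
  fixes a d m :: int
  assumes "0 \<le> d" "d < -a" "0 = a * m + d"
  shows "m = 0"
proof -
  have "a < 0" using assms by linarith
  have "a * m < a * (-1)" "a * 1 < a * m" using assms by linarith+
  then have "-1 < m" "m < 1" using mult_less_cancel_left_neg[OF \<open>a < 0\<close>] by blast+
  then show ?thesis by linarith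
qed

lemma digit_step_pos:
  fixes a b d n m :: int
  assumes "0 < b" "b < -a" "0 \<le> d" "d < -a" "b * n = a * m + d" "0 < n"
  shows "-n < m \<and> m \<le> 0"
proof -
  have "a < 0" using assms by linarith
  have "0 < b * n" using assms(1,6) by simp
  then have "a * 1 < a * m" using assms by linarith
  moreover have "b * n < (-a) * n" using assms(2,6) by (rule mult_strict_right_mono)
  then have "a * m < a * (-n)" using assms by linarith
  ultimately have "m < 1" "-n < m" using mult_less_cancel_left_neg[OF \<open>a < 0\<close>] by blast+
  then show ?thesis by linarith
qed

lemma digit_step_neg:
  fixes a b d n m :: int
  assumes "0 < b" "b < -a" "0 \<le> d" "d < -a" "b * n = a * m + d" "n < 0"
  shows "0 < m \<and> m \<le> -n"
proof -
  have "a < 0" using assms by linarith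
  have "b * n < 0" using assms(1,6) by (rule mult_pos_neg)
  then have "a * m < a * 0" using assms by linarith
  moreover have "(-a) * n < b * n" using assms(2,6) by (rule mult_strict_right_mono_neg)
  then have "a * (1 - n) < a * m" using assms by (simp add: algebra_simps)
  ultimately have "0 < m" "m < 1 - n" using mult_less_cancel_left_neg[OF \<open>a < 0\<close>] by blast+
  then show ?thesis by linarith
qed

text \<open>Ranking \<open>n > 0\<close> just before \<open>-n\<close> makes the step \<open>n \<mapsto> -n\<close> from a negative \<open>n\<close> descend.\<close>

definition zigzag :: "int \<Rightarrow> nat" where
  "zigzag n = (if 0 < n then 2 * nat n - 1 else 2 * nat (- n))"

lemma zigzag_digit_step_less:
  fixes a b d n m :: int
  assumes "0 < b" "b < -a" "0 \<le> d" "d < -a" "b * n = a * m + d" "n \<noteq> 0"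
  shows "zigzag m < zigzag n"
proof (cases "0 < n")
  case True
  then show ?thesis using digit_step_pos[OF assms(1-5)] by (auto simp: zigzag_def)
next
  case False
  then have "n < 0" using assms(6) by linarith
  then show ?thesis using digit_step_neg[OF assms(1-5)] by (auto simp: zigzag_def)
qed

lemma eventually_zero_by_descent:
  fixes N :: "nat \<Rightarrow> 'a::zero" and \<mu> :: "'a \<Rightarrow> nat"
  assumes descent: "\<And>j. N j \<noteq> 0 \<Longrightarrow> \<mu> (N (Suc j)) < \<mu> (N j)"
    and absorbing: "\<And>j. N j = 0 \<Longrightarrow> N (Suc j) = 0"
  shows "\<exists>J. \<forall>j\<ge>J. N j = 0"
proof -
  obtain J where J: "\<And>j. \<mu> (N J) \<le> \<mu> (N j)"
    using ex_has_least_nat[of "\<lambda>_. True" 0 "\<lambda>j. \<mu> (N j)"] by blast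
  have "N J = 0" using descent[of J] J[of "Suc J"] by linarith
  have "N j = 0" if "J \<le> j" for j
    using that
  proof (induction j rule: dec_induct)
    case base
    show ?case by fact
  next
    case (step j)
    from step.IH show ?case by (rule absorbing)
  qed
  then show ?thesis by blast
qed

theorem mainTheorem1:
  fixes a b :: int and N d :: "nat \<Rightarrow> int"
  assumes "coprime a b"
    and "real_of_int a / real_of_int b < 0"
    and "- a > b" and "b > 2"
    and "\<And>j. d j \<in> {0..\<bar>a\<bar> - 1}"
    and "\<And>j. [d j = b * N j] (mod a)"
    and "\<And>j. b * N j = a * N (Suc j) + d j"
  shows "\<exists>J. \<forall>j\<ge>J. N j = 0"
  \<comment> \<open>Coprimality, the sign condition and the congruence are implied by or irrelevant to the
      other hypotheses; of \<open>b > 2\<close> only \<open>b > 0\<close> is needed.\<close>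
proof (rule eventually_zero_by_descent[where \<mu> = zigzag])
  have b: "0 < b" "b < -a" using assms(3,4) by linarith+
  have digit: "0 \<le> d j" "d j < -a" for j using assms(5)[of j] b by auto
  show "zigzag (N (Suc j)) < zigzag (N j)" if "N j \<noteq> 0" for j
    using zigzag_digit_step_less[OF b digit assms(7) that] .
  show "N (Suc j) = 0" if "N j = 0" for j
    using digit_step_zero[OF digit] assms(7)[of j] that by simp
qed

end
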